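(* Let $r\ge 3$ and $k\ge 2$ be integers. There exist $r$-sets $(e_i)_{i=0}^{T_1}$, all containing $v_1^r$, and an $r$-graph $H_1$ with vertex set $A_{r-1}^*\cup\{v_1^r\}$ that is $(e_i)_{i=0}^{T_1}$-sequential, where $T_1=(2k-1)^{r-3}(8k^2-12k+6)-2$.
   Context: Fix a positive integer $k$. For every integer $i\ge1$ let $A_i=\{v_1^i,v_2^i,\dots,v_{4k-3}^i\}$ (pairwise disjoint sets) and $A_i^*=\bigcup_{j=1}^iA_j$. An $r$-graph is an $r$-uniform hypergraph identified with its edge set; $F_r=K^r_{r+1}$. For an $r$-graph $G_0$ on vertex set $V$, the $F_r$-bootstrap process in the complete $r$-graph on $V$ is: $G_i=G_{i-1}\cup\{e : e\notin G_{i-1} \text{ an } r\text{-subset of } V,\ \exists\, w\in V\setminus e \text{ with every other } r\text{-subset of } e\cup\{w\} \text{ in } G_{i-1}\}$; the $r$-sets in $G_i\setminus G_{i-1}$ are infected at step $i$; $G_0$ is stationary if $G_1=G_0$. Definition (sequential): Let $r\ge3$, $H$ an $r$-graph with vertex set $V(H)\subseteq A_r^*$, and $(e_i)_{i=0}^T$ a sequence of $r$-subsets of $V(H)$ with $e_0\in H$. Then $H$ is $(e_i)_{i=0}^T$-sequential if, for the $F_r$-bootstrap process in the complete $r$-graph on $V(H)$: (i) starting from $H$, the process runs for $T$ steps (becomes stationary after step $T$), infecting only $e_i$ at step $i$ for each $i\in[1,T]$; (ii) $H\setminus\{e_0\}$ is stationary; (iii) starting from $(H\cup\{e_T\})\setminus\{e_0\}$,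 the process infects only $e_{T-i}$ at step $i$ for each $i\in[1,T]$. *)

theory Defs
  imports Main
begin

text \<open>Vertex v_j^i is represented as the pair (i, j).\<close>

definition vtx :: "nat \<Rightarrow> nat \<Rightarrow> nat \<times> nat" where
  "vtx i j = (i, j)"

definition Aset :: "nat \<Rightarrow> nat \<Rightarrow> (nat \<times> nat) set" where
  "Aset k i = {vtx i j | j. 1 \<le> j \<and> j \<le> 4 * k - 3}"

definition Astar :: "nat \<Rightarrow> nat \<Rightarrow> (nat \<times> nat) set" where
  "Astar k i = (\<Union>j\<in>{1..i}. Aset k j)"

text \<open>One step of the K^r_{r+1}-bootstrap process in the complete r-graph on V.\<close>
definition bstep :: "nat \<Rightarrow> 'a set \<Rightarrow> 'a set set \<Rightarrow> 'a set set" where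
  "bstep r V G = G \<union> {e. e \<subseteq> V \<and> card e = r \<and> e \<notin> G \<and>
      (\<exists>w \<in> V - e. \<forall>f. f \<subseteq> insert w e \<and> card f = r \<and> f \<noteq> e \<longrightarrow> f \<in> G)}"

definition bproc :: "nat \<Rightarrow> 'a set \<Rightarrow> 'a set set \<Rightarrow> nat \<Rightarrow> 'a set set" where
  "bproc r V G i = (bstep r V ^^ i) G"

definition stationary :: "nat \<Rightarrow> 'a set \<Rightarrow> 'a set set \<Rightarrow> bool" where
  "stationary r V G \<longleftrightarrow> bstep r V G = G"

definition r_graph :: "nat \<Rightarrow> 'a set \<Rightarrow> 'a set set \<Rightarrow> bool" where
  "r_graph r V H \<longleftrightarrow> (\<forall>e\<in>H. e \<subseteq> V \<and> card e = r)"

definition sequential ::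
  "nat \<Rightarrow> nat \<Rightarrow> (nat \<times> nat) set \<Rightarrow> (nat \<times> nat) set set \<Rightarrow>
   (nat \<Rightarrow> (nat \<times> nat) set) \<Rightarrow> nat \<Rightarrow> bool" where
  "sequential k r V H e T \<longleftrightarrow>
     r \<ge> 3 \<and> V \<subseteq> Astar k r \<and> r_graph r V H \<and>
     (\<forall>i \<le> T. e i \<subseteq> V \<and> card (e i) = r) \<and> e 0 \<in> H \<and>
     (\<forall>i \<in> {1..T}. bproc r V H i - bproc r V H (i - 1) = {e i}) \<and>
     bproc r V H (Suc T) = bproc r V H T \<and>
     stationary r V (H - {e 0}) \<and>
     (\<forall>i \<in> {1..T}. bproc r V ((H \<union> {e T}) - {e 0}) i
                     - bproc r V ((H \<union> {e T}) - {e 0}) (i - 1) = {e (T - i)})"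

end

theory Submission
  imports Defs
begin

text \<open>
  Let \<open>e_0, \<dots>, e_T\<close> be \<open>r\<close>-sets such that each \<open>S_i = e_{i-1} \<union> e_i\<close> has \<open>r + 1\<close> elements, and
  let the shadow consist of all \<open>r\<close>-subsets of the \<open>S_i\<close>. Suppose that \<open>S_i\<close> contains no \<open>e_j\<close>
  other than \<open>e_{i-1}\<close> and \<open>e_i\<close>, and that every \<open>(r + 1)\<close>-set all but at most one of whose
  \<open>r\<close>-subsets lie in the shadow is one of the \<open>S_i\<close>. Then one step of the process, started from
  the shadow without \<open>{e_j | j \<in> R}\<close>, infects exactly those \<open>e_j\<close> with \<open>j \<in> R\<close> for which
  \<open>j - 1\<close> or \<open>j + 1\<close> lies in \<open>[0, T] - R\<close>. Hence the shadow without \<open>e_1, \<dots>, e_T\<close> is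
  sequential: the \<open>e_i\<close> return one at a time, forwards, and backwards once \<open>e_0\<close> is traded
  for \<open>e_T\<close>.

  Such chains come from square-free induced paths \<open>P_0, \<dots>, P_T\<close> in the grid \<open>[4k - 3]^(r-1)\<close>:
  \<open>e_i\<close> consists of \<open>v^r_1\<close> and the vertices \<open>v^l_{P_i(l)}\<close>, and \<open>S_i\<close> then encodes the edge
  \<open>P_{i-1} P_i\<close>. Long paths of this kind are built one coordinate at a time by a snake that runs
  back and forth along the previous path on the odd levels \<open>1, 3, \<dots>, 4k - 3\<close> of the new
  coordinate, climbing through the even levels in between; it has \<open>2 (2k - 1)^(r-1) - 1\<close>
  points, more than the \<open>T_1 + 1\<close> required.
\<close>

section \<open>Sequential chains\<close>

definition chain_union :: "(nat \<Rightarrow> 'a set) \<Rightarrow> nat \<Rightarrow> 'a set" where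
  "chain_union e i = e (i - 1) \<union> e i"

definition chain_shadow :: "nat \<Rightarrow> (nat \<Rightarrow> 'a set) \<Rightarrow> nat \<Rightarrow> 'a set set" where
  "chain_shadow r e T = {X. card X = r \<and> (\<exists>i\<in>{1..T}. X \<subseteq> chain_union e i)}"

definition frontier :: "nat \<Rightarrow> nat set \<Rightarrow> nat set" where
  "frontier T R = {j \<in> R. \<exists>i\<in>{1..T}. (j = i \<and> i - 1 \<notin> R) \<or> (j = i - 1 \<and> i \<notin> R)}"

lemma frontier_empty: "frontier T {} = {}"
  by (simp add: frontier_def)

lemma frontier_atMost: "frontier T {..T} = {}"
  by (auto simp: frontier_def)

lemma frontier_atLeastAtMost:
  assumes "1 \<le> a" "a \<le> T"
  shows "frontier T {a..T} = {a}"
  using assms by (auto simp: frontier_def intro!: bexI[of _ a])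

lemma frontier_lessThan:
  assumes "b < T"
  shows "frontier T {..<Suc b} = {b}"
  using assms by (auto simp: frontier_def intro!: bexI[of _ "Suc b"])

lemma bproc_Suc: "bproc r V G (Suc t) = bstep r V (bproc r V G t)"
  by (simp add: bproc_def)

locale sequential_chain =
  fixes r :: nat and V :: "'a set" and e :: "nat \<Rightarrow> 'a set" and T :: nat
  assumes T_pos: "1 \<le> T"
    and e_subset: "\<And>i. i \<le> T \<Longrightarrow> e i \<subseteq> V"
    and card_e: "\<And>i. i \<le> T \<Longrightarrow> card (e i) = r"
    and card_chain_union: "\<And>i. i \<in> {1..T} \<Longrightarrow> card (chain_union e i) = Suc r"
    and e_subset_chain_union:
      "\<And>i j. i \<in> {1..T} \<Longrightarrow> j \<le> T \<Longrightarrow> e j \<subseteq> chain_union e i \<Longrightarrow> j = i - 1 \<or> j = i"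
    and chain_union_closed:
      "\<And>S x. S \<subseteq> V \<Longrightarrow> card S = Suc r \<Longrightarrow> x \<in> S \<Longrightarrow>
        (\<forall>y\<in>S - {x}. S - {y} \<in> chain_shadow r e T) \<Longrightarrow> \<exists>i\<in>{1..T}. S = chain_union e i"
begin

abbreviation "shadow \<equiv> chain_shadow r e T"

lemma finite_chain_union: "i \<in> {1..T} \<Longrightarrow> finite (chain_union e i)"
  using card_chain_union card.infinite by fastforce

lemma chain_union_subset:
  assumes "i \<in> {1..T}"
  shows "chain_union e i \<subseteq> V"
proof -
  have "i - 1 \<le> T" "i \<le> T"
    using assms by auto
  then show ?thesis
    using e_subset unfolding chain_union_def by blast
qed

lemma e_in_chain_union: "i \<le> T \<Longrightarrow> \<exists>i'\<in>{1..T}. e i \<subseteq> chain_union e i'"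
proof (cases "i = 0")
  case True
  then show ?thesis
    using T_pos by (auto simp: chain_union_def intro!: bexI[of _ 1])
qed (auto simp: chain_union_def)

lemma finite_e: "i \<le> T \<Longrightarrow> finite (e i)"
  using e_in_chain_union finite_chain_union finite_subset by blast

lemma e_in_shadow: "i \<le> T \<Longrightarrow> e i \<in> shadow"
  using e_in_chain_union card_e by (auto simp: chain_shadow_def)

lemma inj_on_e: "inj_on e {..T}"
proof (rule linorder_inj_onI', rule notI)
  fix i j assume ij: "i \<in> {..T}" "j \<in> {..T}" "i < j" "e i = e j"
  then have "i = j - 1"
    using e_subset_chain_union[of j i] by (auto simp: chain_union_def)
  then have "chain_union e j = e j"
    using ij by (simp add: chain_union_def)
  then show False
    using ij card_e card_chain_union[of j] by simp
qed

lemma e_in_image_iff: "j \<le> T \<Longrightarrow> R \<subseteq> {..T} \<Longrightarrow> e j \<in> e ` R \<longleftrightarrow> j \<in> R"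
  using inj_on_image_mem_iff[OF inj_on_e, of j R] by simp

lemma shadow_minus_insert:
  assumes "j \<le> T" "R \<subseteq> {..T}"
  shows "(shadow - e ` R) \<union> {e j} = shadow - e ` (R - {j})"
proof -
  have "e ` (R - {j}) = e ` R - {e j}"
    using assms inj_on_image_set_diff[OF inj_on_e, of R "{j}"] by auto
  then show ?thesis
    using e_in_shadow[OF assms(1)] by auto
qed

lemma shadow_minus_diff:
  assumes "j \<le> T" "j \<notin> R" "R \<subseteq> {..T}"
  shows "(shadow - e ` R) - (shadow - e ` insert j R) = {e j}"
  using e_in_shadow[OF assms(1)] e_in_image_iff[OF assms(1,3)] assms(2) by auto

lemma r_pos: "1 \<le> r"
proof (rule ccontr)
  assume "\<not> 1 \<le> r"
  then have "card (e 0) = 0" "card (e 1) = 0"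
    using card_e[of 0] card_e[of 1] T_pos by auto
  then have "e 0 = {}" "e 1 = {}"
    using finite_e[of 0] finite_e[of 1] T_pos by simp_all
  then show False
    using card_chain_union[of 1] T_pos by (simp add: chain_union_def)
qed

lemma insert_eq_chain_union:
  assumes X: "X \<subseteq> V" "card X = r" and w: "w \<in> V - X"
    and others: "\<forall>Y. Y \<subseteq> insert w X \<and> card Y = r \<and> Y \<noteq> X \<longrightarrow> Y \<in> shadow"
  shows "\<exists>i\<in>{1..T}. insert w X = chain_union e i"
proof -
  have "finite X"
    using X(2) r_pos card.infinite by force
  then have card_S: "card (insert w X) = Suc r"
    using w X(2) by simp
  have "insert w X - {y} \<in> shadow" if "y \<in> X" for y
  proof -
    have "w \<in> insert w X - {y}"
      using w that by blast
    then have "insert w X - {y} \<noteq> X"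
      using w by blast
    moreover have "card (insert w X - {y}) = r"
      using card_S that by simp
    ultimately show ?thesis
      using others by simp
  qed
  then show ?thesis
    using chain_union_closed[of "insert w X" w] X(1) w card_S by blast
qed

lemma infected_in_frontier:
  assumes R: "R \<subseteq> {..T}" and X: "X \<subseteq> V" "card X = r" "X \<notin> shadow - e ` R"
    and w: "w \<in> V - X"
    and others: "\<forall>Y. Y \<subseteq> insert w X \<and> card Y = r \<and> Y \<noteq> X \<longrightarrow> Y \<in> shadow - e ` R"
  shows "X \<in> e ` frontier T R"
proof -
  obtain i where i: "i \<in> {1..T}" and S_eq: "insert w X = chain_union e i"
    using insert_eq_chain_union[OF X(1,2) w] others by blast
  have "X \<in> shadow"
    using i S_eq X(2) unfolding chain_shadow_def by blast
  then obtain j where j: "j \<in> R" "X = e j"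
    using X(3) by blast
  have jT: "j \<le> T"
    using j R by auto
  have other_infected: "j' \<notin> R" if j': "j' \<le> T" "e j' \<subseteq> insert w X" "j' \<noteq> j" for j'
  proof
    assume "j' \<in> R"
    moreover have "e j' \<noteq> X"
      using j' jT j(2) inj_on_e by (auto dest: inj_onD)
    ultimately show False
      using others j' card_e[of j'] by blast
  qed
  have "e (i - 1) \<subseteq> insert w X" "e i \<subseteq> insert w X" "i - 1 \<le> T" "i \<le> T" "i - 1 \<noteq> i"
    using S_eq i by (auto simp: chain_union_def)
  moreover have "j = i - 1 \<or> j = i"
    using e_subset_chain_union[OF i jT] j(2) S_eq by blast
  ultimately have "(j = i \<and> i - 1 \<notin> R) \<or> (j = i - 1 \<and> i \<notin> R)"
    using other_infected by metis
  then show ?thesis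
    using i j unfolding frontier_def by blast
qed

lemma chain_union_eq_insert:
  assumes i: "i \<in> {1..T}" and j: "j \<in> {i - 1, i}"
  shows "\<exists>w\<in>V - e j. insert w (e j) = chain_union e i"
proof -
  have jT: "j \<le> T"
    using i j by auto
  have "card (e j) < card (chain_union e i)"
    using card_e[OF jT] card_chain_union[OF i] by simp
  then have "\<not> chain_union e i \<subseteq> e j"
    using card_mono[OF finite_e[OF jT]] by (meson leD)
  then obtain w where w: "w \<in> chain_union e i" "w \<notin> e j"
    by blast
  have sub: "insert w (e j) \<subseteq> chain_union e i"
    using w j by (auto simp: chain_union_def)
  have "card (insert w (e j)) = card (chain_union e i)"
    using w finite_e[OF jT] card_e[OF jT] card_chain_union[OF i] by simp
  then have "insert w (e j) = chain_union e i"
    using card_subset_eq[OF finite_chain_union[OF i] sub] by simp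
  moreover have "w \<in> V - e j"
    using w chain_union_subset[OF i] by auto
  ultimately show ?thesis
    by blast
qed

lemma frontier_infected:
  assumes R: "R \<subseteq> {..T}" and j: "j \<in> frontier T R"
  shows "\<exists>w\<in>V - e j. \<forall>Y. Y \<subseteq> insert w (e j) \<and> card Y = r \<and> Y \<noteq> e j \<longrightarrow> Y \<in> shadow - e ` R"
proof -
  obtain i j' where i: "i \<in> {1..T}" and jj': "{j, j'} = {i - 1, i}" and j': "j' \<notin> R"
  proof -
    from j obtain i where "i \<in> {1..T}" "(j = i \<and> i - 1 \<notin> R) \<or> (j = i - 1 \<and> i \<notin> R)"
      unfolding frontier_def by blast
    then show thesis
      using that[of i "i - 1"] that[of i i] by (auto simp: insert_commute)
  qed
  obtain w where w: "w \<in> V - e j" and ins: "insert w (e j) = chain_union e i"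
    using chain_union_eq_insert[OF i] jj' by blast
  have "Y \<in> shadow - e ` R" if Y: "Y \<subseteq> insert w (e j)" "card Y = r" "Y \<noteq> e j" for Y
  proof -
    have "Y \<in> shadow"
      using Y i ins unfolding chain_shadow_def by auto
    moreover have "Y \<notin> e ` R"
    proof
      assume "Y \<in> e ` R"
      then obtain k where k: "k \<in> R" "Y = e k"
        by blast
      then have "k = i - 1 \<or> k = i"
        using e_subset_chain_union[OF i] R Y(1) ins by auto
      then show False
        using k jj' j' Y(3) by (auto simp: doubleton_eq_iff)
    qed
    ultimately show ?thesis
      by blast
  qed
  then show ?thesis
    using w by blast
qed

lemma bstep_shadow_minus:
  assumes "R \<subseteq> {..T}"
  shows "bstep r V (shadow - e ` R) = (shadow - e ` R) \<union> e ` frontier T R"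
proof -
  let ?G = "shadow - e ` R"
  have "{X. X \<subseteq> V \<and> card X = r \<and> X \<notin> ?G \<and>
      (\<exists>w\<in>V - X. \<forall>Y. Y \<subseteq> insert w X \<and> card Y = r \<and> Y \<noteq> X \<longrightarrow> Y \<in> ?G)} = e ` frontier T R"
  proof (intro subset_antisym subsetI)
    fix X assume "X \<in> {X. X \<subseteq> V \<and> card X = r \<and> X \<notin> ?G \<and>
      (\<exists>w\<in>V - X. \<forall>Y. Y \<subseteq> insert w X \<and> card Y = r \<and> Y \<noteq> X \<longrightarrow> Y \<in> ?G)}"
    then show "X \<in> e ` frontier T R"
      using infected_in_frontier[OF assms] by blast
  next
    fix X assume "X \<in> e ` frontier T R"
    then obtain j where j: "j \<in> frontier T R" "X = e j"
      by blast
    then have "j \<in> R" "j \<le> T"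
      using assms unfolding frontier_def by auto
    then show "X \<in> {X. X \<subseteq> V \<and> card X = r \<and> X \<notin> ?G \<and>
      (\<exists>w\<in>V - X. \<forall>Y. Y \<subseteq> insert w X \<and> card Y = r \<and> Y \<noteq> X \<longrightarrow> Y \<in> ?G)}"
      using j frontier_infected[OF assms] e_subset card_e by blast
  qed
  then show ?thesis
    unfolding bstep_def by simp
qed

lemma bproc_forward:
  "t \<le> T \<Longrightarrow> bproc r V (shadow - e ` {1..T}) t = shadow - e ` {Suc t..T}"
proof (induction t)
  case 0
  then show ?case
    by (simp add: bproc_def)
next
  case (Suc t)
  then have "bproc r V (shadow - e ` {1..T}) (Suc t) = (shadow - e ` {Suc t..T}) \<union> {e (Suc t)}"
    by (simp add: bproc_Suc bstep_shadow_minus frontier_atLeastAtMost)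
  also have "\<dots> = shadow - e ` {Suc (Suc t)..T}"
    using Suc.prems shadow_minus_insert[of "Suc t" "{Suc t..T}"] by (auto simp: Icc_eq_insert_lb_nat)
  finally show ?case .
qed

lemma bproc_backward:
  "t \<le> T \<Longrightarrow> bproc r V (shadow - e ` {..<T}) t = shadow - e ` {..<T - t}"
proof (induction t)
  case 0
  then show ?case
    by (simp add: bproc_def)
next
  case (Suc t)
  then have T_eq: "T - t = Suc (T - Suc t)"
    by simp
  have "frontier T {..<T - t} = {T - Suc t}"
    using T_eq frontier_lessThan[of "T - Suc t"] Suc.prems by simp
  moreover have "{..<T - t} \<subseteq> {..T}"
    by auto
  ultimately have "bproc r V (shadow - e ` {..<T}) (Suc t) = (shadow - e ` {..<T - t}) \<union> {e (T - Suc t)}"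
    using Suc bstep_shadow_minus[of "{..<T - t}"] by (simp add: bproc_Suc)
  also have "\<dots> = shadow - e ` ({..<T - t} - {T - Suc t})"
    by (rule shadow_minus_insert) auto
  also have "{..<T - t} - {T - Suc t} = {..<T - Suc t}"
    using T_eq by auto
  finally show ?case .
qed

definition chain_graph :: "'a set set" where
  "chain_graph = shadow - e ` {1..T}"

lemma r_graph_chain_graph: "r_graph r V chain_graph"
  using chain_union_subset unfolding r_graph_def chain_graph_def chain_shadow_def by blast

lemma e0_in_chain_graph: "e 0 \<in> chain_graph"
  using e_in_shadow e_in_image_iff[of 0 "{1..T}"] unfolding chain_graph_def by auto

lemma chain_graph_infects:
  assumes "i \<in> {1..T}"
  shows "bproc r V chain_graph i - bproc r V chain_graph (i - 1) = {e i}"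
proof -
  have "i - 1 \<le> T" "Suc (i - 1) = i"
    using assms by auto
  then have "bproc r V chain_graph (i - 1) = shadow - e ` insert i {Suc i..T}"
    using assms bproc_forward[of "i - 1"] Icc_eq_insert_lb_nat[of i T]
    by (simp add: chain_graph_def)
  then show ?thesis
    using assms bproc_forward[of i] shadow_minus_diff[of i "{Suc i..T}"]
    by (simp add: chain_graph_def)
qed

lemma chain_graph_stops:
  "bproc r V chain_graph (Suc T) = bproc r V chain_graph T"
  using bproc_forward[of T] bstep_shadow_minus[of "{}"]
  by (simp add: chain_graph_def bproc_Suc frontier_empty)

lemma chain_graph_minus_e0_stationary: "stationary r V (chain_graph - {e 0})"
proof -
  have "chain_graph - {e 0} = shadow - e ` {..T}"
  proof -
    have "{..T} = insert 0 {1..T}"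
      by auto
    then show ?thesis
      unfolding chain_graph_def by auto
  qed
  then show ?thesis
    by (simp add: stationary_def bstep_shadow_minus frontier_atMost)
qed

lemma chain_graph_reversed_eq: "(chain_graph \<union> {e T}) - {e 0} = shadow - e ` {..<T}"
proof -
  have "e T \<notin> e ` {..<T}" "e 0 \<notin> e ` {1..T}"
    using e_in_image_iff[of T "{..<T}"] e_in_image_iff[of 0 "{1..T}"] by fastforce+
  moreover have "{..<T} = insert 0 {1..<T}" "{1..T} = insert T {1..<T}"
    using T_pos by auto
  ultimately show ?thesis
    using e_in_shadow[of T] T_pos unfolding chain_graph_def by auto
qed

lemma chain_graph_reversed_infects:
  assumes "i \<in> {1..T}"
  shows "bproc r V ((chain_graph \<union> {e T}) - {e 0}) i
       - bproc r V ((chain_graph \<union> {e T}) - {e 0}) (i - 1) = {e (T - i)}"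
proof -
  have "T - (i - 1) = Suc (T - i)"
    using assms by auto
  then have "bproc r V (shadow - e ` {..<T}) (i - 1) = shadow - e ` insert (T - i) {..<T - i}"
    using assms bproc_backward[of "i - 1"] by (simp add: lessThan_Suc)
  moreover have "{..<T - i} \<subseteq> {..T}"
    by auto
  ultimately show ?thesis
    unfolding chain_graph_reversed_eq
    using assms bproc_backward[of i] shadow_minus_diff[of "T - i" "{..<T - i}"] by simp
qed

end

section \<open>Square-free induced paths in grids\<close>

definition grid_adj :: "nat \<Rightarrow> (nat \<Rightarrow> nat) \<Rightarrow> (nat \<Rightarrow> nat) \<Rightarrow> bool" where
  "grid_adj d P Q \<longleftrightarrow>
     (\<exists>j\<in>{1..d}. (P j = Suc (Q j) \<or> Q j = Suc (P j)) \<and> (\<forall>l\<in>{1..d}. l \<noteq> j \<longrightarrow> P l = Q l))"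

definition walk_step :: "(nat \<Rightarrow> nat \<Rightarrow> nat) \<Rightarrow> nat \<Rightarrow> nat \<Rightarrow> nat \<Rightarrow> nat \<Rightarrow> nat \<Rightarrow> nat \<Rightarrow> bool" where
  "walk_step f N j l a a' b \<longleftrightarrow>
     (\<exists>s. Suc s < N \<and> ((f s j = a \<and> f (Suc s) j = a') \<or> (f s j = a' \<and> f (Suc s) j = a)) \<and> f s l = b)"

text \<open>In no pair of coordinates \<open>j, l\<close> does the walk traverse all four sides of a rectangle
  \<open>{a, a'} \<times> {b, b'}\<close>, not even at different values of the remaining coordinates.\<close>
definition square_free :: "nat \<Rightarrow> (nat \<Rightarrow> nat \<Rightarrow> nat) \<Rightarrow> nat \<Rightarrow> bool" where
  "square_free d f N \<longleftrightarrow> (\<forall>j\<in>{1..d}. \<forall>l\<in>{1..d}. \<forall>a a' b b'. j \<noteq> l \<longrightarrow> a \<noteq> a' \<longrightarrow> b \<noteq> b' \<longrightarrow>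
     \<not> (walk_step f N j l a a' b \<and> walk_step f N j l a a' b' \<and>
        walk_step f N l j b b' a \<and> walk_step f N l j b b' a'))"

definition good_walk :: "nat \<Rightarrow> nat \<Rightarrow> (nat \<Rightarrow> nat \<Rightarrow> nat) \<Rightarrow> nat \<Rightarrow> bool" where
  "good_walk d n f N \<longleftrightarrow>
     (\<forall>s<N. \<forall>t<N. (\<forall>l\<in>{1..d}. f s l = f t l) \<longrightarrow> s = t) \<and>
     (\<forall>s. Suc s < N \<longrightarrow> grid_adj d (f s) (f (Suc s))) \<and>
     (\<forall>s<N. \<forall>t<N. grid_adj d (f s) (f t) \<longrightarrow> s = Suc t \<or> t = Suc s) \<and>
     square_free d f N \<and>
     (\<forall>s<N. \<forall>l\<in>{1..d}. f s l \<in> {1..n})"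

lemma grid_adj_cong:
  assumes "grid_adj d P Q" "\<forall>l\<in>{1..d}. P l = P' l" "\<forall>l\<in>{1..d}. Q l = Q' l"
  shows "grid_adj d P' Q'"
  using assms unfolding grid_adj_def by metis

lemma grid_adj_upd:
  assumes "m \<in> {1..d}" "c = Suc (P m) \<or> P m = Suc c"
  shows "grid_adj d P (P(m := c))"
  unfolding grid_adj_def using assms by (intro bexI[of _ m]) auto

lemma grid_adj_upd_both:
  assumes "grid_adj d P Q" "P m = Q m"
  shows "grid_adj d (P(m := c)) (Q(m := c))"
proof -
  obtain j where j: "j \<in> {1..d}" "P j = Suc (Q j) \<or> Q j = Suc (P j)"
    "\<forall>l\<in>{1..d}. l \<noteq> j \<longrightarrow> P l = Q l"
    using assms(1) unfolding grid_adj_def by blast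
  then have "j \<noteq> m"
    using assms(2) by auto
  then show ?thesis
    unfolding grid_adj_def using j by (intro bexI[of _ j]) auto
qed

lemma grid_adj_sym: "grid_adj d P Q \<Longrightarrow> grid_adj d Q P"
  unfolding grid_adj_def by metis

lemma grid_adj_extend:
  assumes "grid_adj D P Q"
  shows "grid_adj (Suc D) (P(Suc D := x)) (Q(Suc D := x))"
proof -
  obtain j where j: "j \<in> {1..D}" "P j = Suc (Q j) \<or> Q j = Suc (P j)"
    "\<forall>l\<in>{1..D}. l \<noteq> j \<longrightarrow> P l = Q l"
    using assms unfolding grid_adj_def by blast
  show ?thesis
    unfolding grid_adj_def using j by (intro bexI[of _ j]) auto
qed

lemma grid_adj_extend_top:
  assumes "\<forall>l\<in>{1..D}. P l = Q l" "x = Suc y \<or> y = Suc x"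
  shows "grid_adj (Suc D) (P(Suc D := x)) (Q(Suc D := y))"
  unfolding grid_adj_def using assms by (intro bexI[of _ "Suc D"]) auto

lemma grid_adj_coordinate_unique:
  assumes "grid_adj D P Q" "j \<in> {1..D}" "P j \<noteq> Q j"
  shows "\<forall>l\<in>{1..D}. l \<noteq> j \<longrightarrow> P l = Q l"
  using assms unfolding grid_adj_def by metis

lemma grid_adj_restrict:
  assumes "grid_adj (Suc D) P Q" "P (Suc D) = Q (Suc D)"
  shows "grid_adj D P Q"
proof -
  obtain j where j: "j \<in> {1..Suc D}" "P j = Suc (Q j) \<or> Q j = Suc (P j)"
    "\<forall>l\<in>{1..Suc D}. l \<noteq> j \<longrightarrow> P l = Q l"
    using assms(1) unfolding grid_adj_def by blast
  have "j \<noteq> Suc D"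
    using j(2) assms(2) by auto
  then show ?thesis
    unfolding grid_adj_def using j by (intro bexI[of _ j]) auto
qed

lemma grid_adj_top:
  assumes "grid_adj (Suc D) P Q" "P (Suc D) \<noteq> Q (Suc D)"
  shows "\<forall>l\<in>{1..D}. P l = Q l" and "P (Suc D) = Suc (Q (Suc D)) \<or> Q (Suc D) = Suc (P (Suc D))"
proof -
  obtain j where j: "j \<in> {1..Suc D}" "P j = Suc (Q j) \<or> Q j = Suc (P j)"
    "\<forall>l\<in>{1..Suc D}. l \<noteq> j \<longrightarrow> P l = Q l"
    using assms(1) unfolding grid_adj_def by blast
  have "j = Suc D"
    using j(3) assms(2) by fastforce
  then show "\<forall>l\<in>{1..D}. P l = Q l" and "P (Suc D) = Suc (Q (Suc D)) \<or> Q (Suc D) = Suc (P (Suc D))"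
    using j by auto
qed

lemma good_walk_inj: "good_walk d n f N \<Longrightarrow> s < N \<Longrightarrow> t < N \<Longrightarrow> \<forall>l\<in>{1..d}. f s l = f t l \<Longrightarrow> s = t"
  unfolding good_walk_def by blast

lemma good_walk_adj_Suc: "good_walk d n f N \<Longrightarrow> Suc s < N \<Longrightarrow> grid_adj d (f s) (f (Suc s))"
  unfolding good_walk_def by blast

lemma good_walk_adj_consecutive:
  "good_walk d n f N \<Longrightarrow> s < N \<Longrightarrow> t < N \<Longrightarrow> grid_adj d (f s) (f t) \<Longrightarrow> s = Suc t \<or> t = Suc s"
  unfolding good_walk_def by blast

lemma good_walk_square_free: "good_walk d n f N \<Longrightarrow> square_free d f N"
  unfolding good_walk_def by blast

lemma good_walk_range: "good_walk d n f N \<Longrightarrow> s < N \<Longrightarrow> l \<in> {1..d} \<Longrightarrow> f s l \<in> {1..n}"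
  unfolding good_walk_def by blast

lemma good_walk_prefix:
  assumes good: "good_walk d n f N" and le: "N' \<le> N"
  shows "good_walk d n f N'"
proof -
  have "walk_step f N j l a a' b" if "walk_step f N' j l a a' b" for j l a a' b
    using that le unfolding walk_step_def by (blast intro: less_le_trans)
  then have "square_free d f N'"
    using good_walk_square_free[OF good] unfolding square_free_def by meson
  then show ?thesis
    using good le unfolding good_walk_def by auto
qed

section \<open>The chain of a path\<close>

definition point_set :: "nat \<Rightarrow> (nat \<Rightarrow> nat) \<Rightarrow> (nat \<times> nat) set" where
  "point_set d P = (\<lambda>l. vtx l (P l)) ` {1..d}"

lemma mem_point_set: "(l, x) \<in> point_set d P \<longleftrightarrow> l \<in> {1..d} \<and> x = P l"
  by (auto simp: point_set_def vtx_def)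

lemma finite_point_set: "finite (point_set d P)"
  by (simp add: point_set_def)

lemma card_point_set: "card (point_set d P) = d"
  unfolding point_set_def vtx_def by (subst card_image) (auto simp: inj_on_def)

lemma point_set_eq_iff: "point_set d P = point_set d Q \<longleftrightarrow> (\<forall>l\<in>{1..d}. P l = Q l)"
  unfolding point_set_def vtx_def by (auto simp: image_iff)

lemma point_set_upd:
  assumes "m \<in> {1..d}"
  shows "point_set d (P(m := c)) = insert (m, c) (point_set d P - {(m, P m)})"
  using assms by (auto simp: point_set_def vtx_def image_iff)

lemma mem_Astar: "(l, x) \<in> Astar k m \<longleftrightarrow> l \<in> {1..m} \<and> x \<in> {1..4 * k - 3}"
  by (auto simp: Astar_def Aset_def vtx_def)

locale walk_chain =
  fixes d n :: nat and f :: "nat \<Rightarrow> nat \<Rightarrow> nat" and T :: nat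
  assumes two_le_d: "2 \<le> d" and T_pos: "1 \<le> T" and good: "good_walk d n f (Suc T)"
begin

definition apex :: "nat \<times> nat" where
  "apex = vtx (Suc d) 1"

definition walk_edge :: "nat \<Rightarrow> (nat \<times> nat) set" where
  "walk_edge i = insert apex (point_set d (f i))"

definition step_set :: "nat \<Rightarrow> (nat \<times> nat) set" where
  "step_set i = point_set d (f (i - 1)) \<union> point_set d (f i)"

definition covered :: "(nat \<times> nat) set \<Rightarrow> bool" where
  "covered W \<longleftrightarrow> (\<forall>w\<in>W. \<exists>i\<in>{1..T}. W - {w} \<subseteq> step_set i)"

lemma walk_inj: "s \<le> T \<Longrightarrow> t \<le> T \<Longrightarrow> \<forall>l\<in>{1..d}. f s l = f t l \<Longrightarrow> s = t"
  using good_walk_inj[OF good] by simp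

lemma walk_adj_consecutive: "s \<le> T \<Longrightarrow> t \<le> T \<Longrightarrow> grid_adj d (f s) (f t) \<Longrightarrow> s = Suc t \<or> t = Suc s"
  using good_walk_adj_consecutive[OF good] by simp

lemma walk_range: "s \<le> T \<Longrightarrow> l \<in> {1..d} \<Longrightarrow> f s l \<in> {1..n}"
  using good_walk_range[OF good] by simp

lemma walk_adj_step:
  assumes "i \<in> {1..T}"
  shows "grid_adj d (f (i - 1)) (f i)"
proof -
  have "Suc (i - 1) < Suc T" "Suc (i - 1) = i"
    using assms by auto
  then show ?thesis
    using good_walk_adj_Suc[OF good, of "i - 1"] by simp
qed

lemma step_coordinate:
  assumes "i \<in> {1..T}"
  obtains j where "j \<in> {1..d}" "f (i - 1) j = Suc (f i j) \<or> f i j = Suc (f (i - 1) j)"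
    "\<forall>l\<in>{1..d}. l \<noteq> j \<longrightarrow> f (i - 1) l = f i l"
  using walk_adj_step[OF assms] that unfolding grid_adj_def by blast

lemma mem_step_set: "(l, x) \<in> step_set i \<longleftrightarrow> l \<in> {1..d} \<and> (x = f (i - 1) l \<or> x = f i l)"
  by (auto simp: step_set_def mem_point_set)

lemma apex_notin_point_set: "apex \<notin> point_set d P"
  by (simp add: apex_def vtx_def mem_point_set)

lemma apex_notin_step_set: "apex \<notin> step_set i"
  by (simp add: step_set_def apex_notin_point_set)

lemma chain_union_walk_edge: "chain_union walk_edge i = insert apex (step_set i)"
  by (auto simp: chain_union_def walk_edge_def step_set_def)

lemma finite_step_set: "finite (step_set i)"
  by (simp add: step_set_def finite_point_set)

lemma step_set_eq_insert:
  assumes "j \<in> {1..d}" "\<forall>l\<in>{1..d}. l \<noteq> j \<longrightarrow> f (i - 1) l = f i l"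
  shows "step_set i = insert (j, f i j) (point_set d (f (i - 1)))"
proof (rule set_eqI)
  fix y :: "nat \<times> nat"
  obtain l x where "y = (l, x)"
    by fastforce
  then show "y \<in> step_set i \<longleftrightarrow> y \<in> insert (j, f i j) (point_set d (f (i - 1)))"
    using assms by (cases "l = j") (auto simp: mem_step_set mem_point_set)
qed

lemma card_step_set:
  assumes "i \<in> {1..T}"
  shows "card (step_set i) = Suc d"
proof -
  obtain j where j: "j \<in> {1..d}" "f (i - 1) j = Suc (f i j) \<or> f i j = Suc (f (i - 1) j)"
    "\<forall>l\<in>{1..d}. l \<noteq> j \<longrightarrow> f (i - 1) l = f i l"
    using step_coordinate[OF assms] .
  then have "(j, f i j) \<notin> point_set d (f (i - 1))"
    by (auto simp: mem_point_set)
  then show ?thesis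
    using step_set_eq_insert[OF j(1,3)] by (simp add: finite_point_set card_point_set)
qed

lemma same_layer_in_step_set:
  assumes i: "i \<in> {1..T}" and xy: "(l, x) \<in> step_set i" "(l, y) \<in> step_set i" "x \<noteq> y"
  shows "(x = Suc y \<or> y = Suc x)"
    and "(f (i - 1) l = x \<and> f i l = y) \<or> (f (i - 1) l = y \<and> f i l = x)"
    and "\<forall>l'\<in>{1..d}. l' \<noteq> l \<longrightarrow> f (i - 1) l' = f i l'"
proof -
  obtain j where j: "j \<in> {1..d}" "f (i - 1) j = Suc (f i j) \<or> f i j = Suc (f (i - 1) j)"
    "\<forall>l\<in>{1..d}. l \<noteq> j \<longrightarrow> f (i - 1) l = f i l"
    using step_coordinate[OF i] .
  have l: "l \<in> {1..d}" "x = f (i - 1) l \<or> x = f i l" "y = f (i - 1) l \<or> y = f i l"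
    using xy by (auto simp: mem_step_set)
  then have "l = j"
    using j(3) xy(3) by auto
  then show "(x = Suc y \<or> y = Suc x)"
    and "(f (i - 1) l = x \<and> f i l = y) \<or> (f (i - 1) l = y \<and> f i l = x)"
    and "\<forall>l'\<in>{1..d}. l' \<noteq> l \<longrightarrow> f (i - 1) l' = f i l'"
    using j l xy(3) by auto
qed

lemma step_set_minus_layer_point:
  assumes i: "i \<in> {1..T}" and xy: "(l, x) \<in> step_set i" "(l, y) \<in> step_set i" "x \<noteq> y"
  shows "\<exists>s\<in>{i - 1, i}. step_set i - {(l, x)} = point_set d (f s)"
proof -
  note same = same_layer_in_step_set[OF assms]
  have l: "l \<in> {1..d}"
    using xy by (simp add: mem_step_set)
  have "step_set i - {(l, f (i - 1) l)} = point_set d (f i)"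
    "step_set i - {(l, f i l)} = point_set d (f (i - 1))"
    using l same(2,3) xy(3) step_set_eq_insert[OF l same(3)]
    by (auto simp: step_set_def mem_point_set)
  then show ?thesis
    using same(2) by auto
qed

lemma other_coordinate:
  assumes "m \<in> {1..d}"
  obtains l where "l \<in> {1..d}" "l \<noteq> m"
proof -
  have "(if m = 1 then 2 else 1) \<in> {1..d}" "(if m = 1 then 2 else 1) \<noteq> m"
    using two_le_d assms by auto
  then show thesis
    using that by blast
qed

lemma walk_point_of_subset:
  assumes i: "i \<in> {1..T}" and sub: "point_set d P \<subseteq> step_set i"
  shows "\<exists>s\<in>{i - 1, i}. \<forall>l\<in>{1..d}. f s l = P l"
proof -
  obtain j where j: "j \<in> {1..d}" "\<forall>l\<in>{1..d}. l \<noteq> j \<longrightarrow> f (i - 1) l = f i l"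
    using step_coordinate[OF i] by blast
  have P: "P l = f (i - 1) l \<or> P l = f i l" if "l \<in> {1..d}" for l
  proof -
    have "(l, P l) \<in> step_set i"
      using sub that by (auto simp: mem_point_set)
    then show ?thesis
      by (simp add: mem_step_set)
  qed
  show ?thesis
  proof (cases "P j = f (i - 1) j")
    case True
    then have "\<forall>l\<in>{1..d}. f (i - 1) l = P l"
      using P j by metis
    then show ?thesis
      by blast
  next
    case False
    then have "\<forall>l\<in>{1..d}. f i l = P l"
      using P j by metis
    then show ?thesis
      by blast
  qed
qed

lemma step_set_of_walk_adj:
  assumes s: "s \<le> T" and t: "t \<le> T" and adj: "grid_adj d (f s) (f t)"
  shows "\<exists>i\<in>{1..T}. point_set d (f s) \<union> point_set d (f t) = step_set i"
proof -
  consider "s = Suc t" | "t = Suc s"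
    using walk_adj_consecutive[OF s t adj] by blast
  then show ?thesis
  proof cases
    case 1
    then show ?thesis
      using s by (intro bexI[of _ s]) (auto simp: step_set_def)
  next
    case 2
    then show ?thesis
      using t by (intro bexI[of _ t]) (auto simp: step_set_def)
  qed
qed

lemma step_set_of_adjacent_points:
  assumes i1: "i1 \<in> {1..T}" "point_set d P \<subseteq> step_set i1"
    and i2: "i2 \<in> {1..T}" "point_set d Q \<subseteq> step_set i2"
    and adj: "grid_adj d P Q"
  shows "\<exists>i\<in>{1..T}. point_set d P \<union> point_set d Q = step_set i"
proof -
  obtain s where s: "s \<in> {i1 - 1, i1}" "\<forall>l\<in>{1..d}. f s l = P l"
    using walk_point_of_subset[OF i1] by blast
  obtain t where t: "t \<in> {i2 - 1, i2}" "\<forall>l\<in>{1..d}. f t l = Q l"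
    using walk_point_of_subset[OF i2] by blast
  have "s \<le> T" "t \<le> T"
    using s(1) t(1) i1(1) i2(1) by auto
  have "grid_adj d (f s) (f t)"
    by (rule grid_adj_cong[OF adj]) (use s t in auto)
  moreover have "point_set d (f s) = point_set d P" "point_set d (f t) = point_set d Q"
    using s t by (simp_all add: point_set_eq_iff)
  ultimately show ?thesis
    using step_set_of_walk_adj[OF \<open>s \<le> T\<close> \<open>t \<le> T\<close>] by simp
qed

lemma walk_no_four_cycle:
  assumes "s1 \<le> T" "s2 \<le> T" "s3 \<le> T" "s4 \<le> T"
    and "grid_adj d (f s1) (f s2)" "grid_adj d (f s2) (f s3)"
    and "grid_adj d (f s3) (f s4)" "grid_adj d (f s4) (f s1)"
    and "s1 \<noteq> s3" "s2 \<noteq> s4"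
  shows False
proof -
  have "s1 = Suc s2 \<or> s2 = Suc s1" "s2 = Suc s3 \<or> s3 = Suc s2"
    "s3 = Suc s4 \<or> s4 = Suc s3" "s4 = Suc s1 \<or> s1 = Suc s4"
    using walk_adj_consecutive assms by blast+
  then show False
    using assms(9,10) by arith
qed

lemma walk_step_in_step_set:
  assumes i: "i \<in> {1..T}" and xy: "(l, x) \<in> step_set i" "(l, y) \<in> step_set i" "x \<noteq> y"
    and z: "(l', z) \<in> step_set i" "l' \<noteq> l"
  shows "walk_step f (Suc T) l l' x y z"
proof -
  note same = same_layer_in_step_set[OF i xy]
  have "f (i - 1) l' = z"
    using z same(3) by (auto simp: mem_step_set)
  moreover have "Suc (i - 1) < Suc T" "Suc (i - 1) = i"
    using i by auto
  ultimately show ?thesis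
    using same(2) unfolding walk_step_def by (intro exI[of _ "i - 1"]) auto
qed

lemma covered_layer:
  assumes cov: "covered W" and card_W: "2 \<le> card W" and lx: "(l, x) \<in> W"
  shows "l \<in> {1..d}"
proof -
  have "finite W"
    using card_W by (rule_tac ccontr) simp
  then have "card (W - {(l, x)}) = card W - 1"
    using lx by simp
  then have "card (W - {(l, x)}) \<noteq> 0"
    using card_W by simp
  then obtain w where w: "w \<in> W" "w \<noteq> (l, x)"
    by (metis Diff_iff all_not_in_conv card.empty singletonI)
  then obtain i where "W - {w} \<subseteq> step_set i"
    using cov unfolding covered_def by blast
  then show ?thesis
    using lx w by (auto simp: mem_step_set)
qed

lemma covered_no_layer_triple:
  assumes cov: "covered W" and abc: "(l, a) \<in> W" "(l, b) \<in> W" "(l, c) \<in> W"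
    and distinct: "a \<noteq> b" "b \<noteq> c" "a \<noteq> c"
  shows False
proof -
  have adj: "x = Suc y \<or> y = Suc x"
    if h: "(l, x) \<in> W" "(l, y) \<in> W" "(l, z) \<in> W" "x \<noteq> y" "z \<noteq> x" "z \<noteq> y" for x y z
  proof -
    obtain i where i: "i \<in> {1..T}" "W - {(l, z)} \<subseteq> step_set i"
      using cov h(3) unfolding covered_def by blast
    then have "(l, x) \<in> step_set i" "(l, y) \<in> step_set i"
      using h by auto
    then show ?thesis
      using same_layer_in_step_set(1)[OF i(1)] h(4) by blast
  qed
  have "a = Suc b \<or> b = Suc a" "b = Suc c \<or> c = Suc b" "a = Suc c \<or> c = Suc a"
    using adj[of a b c] adj[of b c a] adj[of a c b] abc distinct by auto
  then show False
    by arith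
qed

lemma covered_no_rectangle:
  assumes cov: "covered W" and card_W: "2 \<le> card W" and jm: "j \<noteq> m"
    and in_W: "(j, a) \<in> W" "(j, a') \<in> W" "(m, b) \<in> W" "(m, b') \<in> W"
    and distinct: "a \<noteq> a'" "b \<noteq> b'"
  shows False
proof -
  have step: "walk_step f (Suc T) l l' x y z"
    if h: "(l, x) \<in> W" "(l, y) \<in> W" "(l', z) \<in> W" "(l', z') \<in> W" "x \<noteq> y" "z \<noteq> z'" "l' \<noteq> l"
    for l l' x y z z'
  proof -
    obtain i where i: "i \<in> {1..T}" "W - {(l', z')} \<subseteq> step_set i"
      using cov h(4) unfolding covered_def by blast
    then have "(l, x) \<in> step_set i" "(l, y) \<in> step_set i" "(l', z) \<in> step_set i"
      using h by auto
    then show ?thesis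
      using walk_step_in_step_set[OF i(1)] h(5,7) by blast
  qed
  have "j \<in> {1..d}" "m \<in> {1..d}"
    using covered_layer[OF cov card_W] in_W by blast+
  moreover have "walk_step f (Suc T) j m a a' b" "walk_step f (Suc T) j m a a' b'"
    "walk_step f (Suc T) m j b b' a" "walk_step f (Suc T) m j b b' a'"
    using step in_W distinct jm by metis+
  ultimately show False
    using good_walk_square_free[OF good] jm distinct unfolding square_free_def by blast
qed

lemma covered_insert_point_set:
  assumes cov: "covered W" and m: "m \<in> {1..d}" and c: "c \<noteq> P m"
    and W: "W = insert (m, c) (point_set d P)"
  shows "\<exists>i\<in>{1..T}. W = step_set i"
proof -
  obtain l where l: "l \<in> {1..d}" "l \<noteq> m"
    using other_coordinate[OF m] .
  have in_W: "(m, c) \<in> W" "(m, P m) \<in> W" "(l, P l) \<in> W"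
    using W m l by (auto simp: mem_point_set)
  obtain i1 where i1: "i1 \<in> {1..T}" "W - {(l, P l)} \<subseteq> step_set i1"
    using cov in_W(3) unfolding covered_def by blast
  then have "c = Suc (P m) \<or> P m = Suc c"
    using same_layer_in_step_set(1)[OF i1(1), of m c "P m"] in_W l(2) c by blast
  then have adj: "grid_adj d P (P(m := c))"
    by (rule grid_adj_upd[OF m])
  obtain i2 where i2: "i2 \<in> {1..T}" "W - {(m, c)} \<subseteq> step_set i2"
    using cov in_W(1) unfolding covered_def by blast
  obtain i3 where i3: "i3 \<in> {1..T}" "W - {(m, P m)} \<subseteq> step_set i3"
    using cov in_W(2) unfolding covered_def by blast
  have "point_set d P \<subseteq> W - {(m, c)}" "point_set d (P(m := c)) \<subseteq> W - {(m, P m)}"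
    using W c point_set_upd[OF m] by (auto simp: mem_point_set)
  moreover have "W = point_set d P \<union> point_set d (P(m := c))"
    using W m point_set_upd[OF m] by (auto simp: mem_point_set)
  ultimately show ?thesis
    using step_set_of_adjacent_points[OF i2(1) _ i3(1) _ adj] i2(2) i3(2) by auto
qed

lemma covered_replace_layer_point:
  assumes cov: "covered W" and card_W: "2 \<le> card W" and i: "i \<in> {1..T}"
    and lxy: "(l, x) \<in> step_set i" "(l, y) \<in> step_set i" "x \<noteq> y"
    and w: "(m, c) \<notin> step_set i" and W_eq: "W = insert (m, c) (step_set i - {(l, x)})"
  shows "\<exists>i\<in>{1..T}. W = step_set i"
proof -
  have m: "m \<in> {1..d}"
    using covered_layer[OF cov card_W] W_eq by blast
  obtain s where s: "s \<in> {i - 1, i}" "step_set i - {(l, x)} = point_set d (f s)"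
    using step_set_minus_layer_point[OF i lxy(1,2)] lxy(3) by blast
  have "c \<noteq> f s m"
    using s(1) w m by (auto simp: mem_step_set)
  then show ?thesis
    using covered_insert_point_set[OF cov m] W_eq s(2) by simp
qed

lemma covered_replace_common_value:
  assumes cov: "covered W" and j: "j \<in> {1..d}" "\<forall>l\<in>{1..d}. l \<noteq> j \<longrightarrow> f (i - 1) l = f i l"
    and pq: "f (i - 1) j \<noteq> f i j" and m: "m \<in> {1..d}" "m \<noteq> j"
    and W_eq: "W = insert (m, c) (step_set i - {(m, f (i - 1) m)})"
  shows "\<exists>i\<in>{1..T}. W = step_set i"
proof -
  define P where "P = (f (i - 1))(m := c)"
  have "W = insert (j, f i j) (point_set d P)"
    using W_eq m step_set_eq_insert[OF j] point_set_upd[OF m(1)] unfolding P_def by auto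
  moreover have "f i j \<noteq> P j"
    using pq m(2) by (simp add: P_def)
  ultimately show ?thesis
    using covered_insert_point_set[OF cov j(1)] by blast
qed

text \<open>Replacing a point \<open>z\<close> of a step set by \<open>w0\<close> gives a set of the form
  \<open>point_set d P \<union> point_set d (P(m := c))\<close> if \<open>z\<close> lies in the step coordinate \<open>j\<close> or \<open>w0\<close> in the
  coordinate of \<open>z\<close>; otherwise it has three values in coordinate \<open>j\<close> or contains a rectangle.\<close>
lemma covered_replace_point:
  assumes cov: "covered W" and card_W: "2 \<le> card W" and i: "i \<in> {1..T}"
    and z: "z \<in> step_set i" and w0: "w0 \<notin> step_set i" and W_eq: "W = insert w0 (step_set i - {z})"
  shows "\<exists>i\<in>{1..T}. W = step_set i"
proof -
  obtain m0 c mz zv where w0_eq: "w0 = (m0, c)" and z_eq: "z = (mz, zv)"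
    by fastforce
  obtain j where j: "j \<in> {1..d}" "f (i - 1) j = Suc (f i j) \<or> f i j = Suc (f (i - 1) j)"
    "\<forall>l\<in>{1..d}. l \<noteq> j \<longrightarrow> f (i - 1) l = f i l"
    using step_coordinate[OF i] .
  have m0: "m0 \<in> {1..d}"
    using covered_layer[OF cov card_W] W_eq w0_eq by blast
  have c: "c \<noteq> f (i - 1) m0" "c \<noteq> f i m0"
    using w0 w0_eq m0 by (auto simp: mem_step_set)
  have pq: "f (i - 1) j \<noteq> f i j"
    using j(2) by auto
  have mz: "mz \<in> {1..d}" "zv = f (i - 1) mz \<or> zv = f i mz"
    using z z_eq by (auto simp: mem_step_set)
  consider "mz = j" | "mz \<noteq> j" "m0 = mz" | "mz \<noteq> j" "m0 = j" | "mz \<noteq> j" "m0 \<noteq> j" "m0 \<noteq> mz"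
    by blast
  then show ?thesis
  proof cases
    case 1
    define y where "y = (if zv = f (i - 1) j then f i j else f (i - 1) j)"
    have "(j, y) \<in> step_set i" "y \<noteq> zv"
      using mz(2) pq j(1) unfolding y_def by (auto simp: mem_step_set)
    then show ?thesis
      using covered_replace_layer_point[OF cov card_W i] z w0 W_eq unfolding z_eq w0_eq 1 by blast
  next
    case 2
    then have "zv = f (i - 1) m0"
      using mz j(3) by auto
    then show ?thesis
      using covered_replace_common_value[OF cov j(1,3) pq m0] 2 W_eq w0_eq z_eq by simp
  next
    case 3
    have "(j, f (i - 1) j) \<in> W" "(j, f i j) \<in> W" "(j, c) \<in> W"
      using W_eq w0_eq z_eq 3 j(1) by (auto simp: mem_step_set)
    then show ?thesis
      using covered_no_layer_triple[OF cov] pq c 3 by blast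
  next
    case 4
    have "(j, f (i - 1) j) \<in> W" "(j, f i j) \<in> W" "(m0, c) \<in> W" "(m0, f (i - 1) m0) \<in> W"
      using W_eq w0_eq z_eq 4 j(1) m0 by (auto simp: mem_step_set)
    then show ?thesis
      using covered_no_rectangle[OF cov card_W] pq c 4 by blast
  qed
qed

lemma covered_step_set:
  assumes cov: "covered W" and card_W: "card W = Suc d"
  shows "\<exists>i\<in>{1..T}. W = step_set i"
proof -
  have fin: "finite W" and two_le_card: "2 \<le> card W"
    using card_W two_le_d by (auto intro: card_ge_0_finite)
  have "W \<noteq> {}"
    using card_W by auto
  then obtain w0 where w0: "w0 \<in> W"
    by blast
  obtain i where i: "i \<in> {1..T}" and sub: "W - {w0} \<subseteq> step_set i"
    using cov w0 unfolding covered_def by blast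
  have "card (step_set i - (W - {w0})) = 1"
    using card_step_set[OF i] card_W w0 fin sub by (simp add: card_Diff_subset)
  then obtain z where z: "step_set i - (W - {w0}) = {z}"
    by (rule card_1_singletonE)
  then have step_eq: "step_set i = insert z (W - {w0})" and z_in: "z \<in> step_set i"
    using sub by auto
  show ?thesis
  proof (cases "w0 = z")
    case True
    then show ?thesis
      using i step_eq w0 by (auto intro!: bexI[of _ i])
  next
    case False
    then have "w0 \<notin> step_set i" "W = insert w0 (step_set i - {z})"
      using step_eq w0 z by auto
    then show ?thesis
      using covered_replace_point[OF cov two_le_card i z_in] by blast
  qed
qed

lemma walk_no_translated_step:
  assumes i: "i \<in> {1..T}" and m: "m \<in> {1..d}" "f (i - 1) m = f i m"
    and c: "c = Suc (f i m) \<or> f i m = Suc c"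
    and s1: "s1 \<le> T" "\<forall>l\<in>{1..d}. f s1 l = ((f (i - 1))(m := c)) l"
    and s2: "s2 \<le> T" "\<forall>l\<in>{1..d}. f s2 l = ((f i)(m := c)) l"
  shows False
proof -
  obtain j where j: "j \<in> {1..d}" "f (i - 1) j = Suc (f i j) \<or> f i j = Suc (f (i - 1) j)"
    "\<forall>l\<in>{1..d}. l \<noteq> j \<longrightarrow> f (i - 1) l = f i l"
    using step_coordinate[OF i] .
  have pq: "f (i - 1) j \<noteq> f i j" and jm: "j \<noteq> m"
    using j(2) m(2) by auto
  have adj_p: "grid_adj d (f (i - 1)) ((f (i - 1))(m := c))" and adj_q: "grid_adj d (f i) ((f i)(m := c))"
    using grid_adj_upd[OF m(1)] c m(2) by auto
  have adj_pq: "grid_adj d ((f (i - 1))(m := c)) ((f i)(m := c))"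
    using grid_adj_upd_both[OF walk_adj_step[OF i] m(2)] .
  have "s1 \<noteq> i" "s2 \<noteq> i - 1"
    using s1(2) s2(2) j(1) jm pq by force+
  moreover have "grid_adj d (f (i - 1)) (f s1)" "grid_adj d (f s1) (f s2)"
    "grid_adj d (f s2) (f i)" "grid_adj d (f i) (f (i - 1))"
    using grid_adj_cong[OF adj_p] grid_adj_cong[OF adj_pq] grid_adj_cong[OF grid_adj_sym[OF adj_q]]
      grid_adj_sym[OF walk_adj_step[OF i]] s1(2) s2(2) by auto
  moreover have "i - 1 \<le> T" "i \<le> T"
    using i by auto
  ultimately show False
    using walk_no_four_cycle[of "i - 1" s1 s2 i] s1(1) s2(1) by blast
qed

lemma step_set_insert_off_coordinate:
  assumes i: "i \<in> {1..T}" and j: "\<forall>l\<in>{1..d}. l \<noteq> j \<longrightarrow> f (i - 1) l = f i l" "f (i - 1) j \<noteq> f i j"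
    and m: "m \<in> {1..d}" "m \<noteq> j" and c: "c \<noteq> f (i - 1) m"
    and i1: "i1 \<in> {1..T}" "insert (m, c) (step_set i) - {(j, f i j)} \<subseteq> step_set i1"
    and i2: "i2 \<in> {1..T}" "insert (m, c) (step_set i) - {(j, f (i - 1) j)} \<subseteq> step_set i2"
  shows False
proof -
  let ?p = "(f (i - 1))(m := c)" and ?q = "(f i)(m := c)"
  have "(m, f (i - 1) m) \<in> step_set i"
    using m by (simp add: mem_step_set)
  then have "(m, c) \<in> step_set i1" "(m, f (i - 1) m) \<in> step_set i1"
    using i1(2) m(2) by auto
  moreover have pm: "f (i - 1) m = f i m"
    using j(1) m by blast
  ultimately have cm: "c = Suc (f i m) \<or> f i m = Suc c"
    using same_layer_in_step_set(1)[OF i1(1)] c by metis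
  have "(j, f i j) \<notin> point_set d (f (i - 1))" "(j, f (i - 1) j) \<notin> point_set d (f i)"
    using j(2) by (simp_all add: mem_point_set)
  then have "point_set d ?p \<subseteq> insert (m, c) (step_set i) - {(j, f i j)}"
    "point_set d ?q \<subseteq> insert (m, c) (step_set i) - {(j, f (i - 1) j)}"
    using m(2) unfolding point_set_upd[OF m(1)] step_set_def by auto
  then have "point_set d ?p \<subseteq> step_set i1" "point_set d ?q \<subseteq> step_set i2"
    using i1(2) i2(2) by blast+
  then obtain s1 s2 where s1: "s1 \<in> {i1 - 1, i1}" "\<forall>l\<in>{1..d}. f s1 l = ?p l"
    and s2: "s2 \<in> {i2 - 1, i2}" "\<forall>l\<in>{1..d}. f s2 l = ?q l"
    using walk_point_of_subset[OF i1(1)] walk_point_of_subset[OF i2(1)] by meson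
  moreover have "s1 \<le> T" "s2 \<le> T"
    using s1(1) s2(1) i1(1) i2(1) by auto
  ultimately show False
    using walk_no_translated_step[OF i m(1) pm cm] by blast
qed

lemma step_set_insert_not_covered:
  assumes i: "i \<in> {1..T}" and x: "x \<notin> step_set i"
    and cov: "\<forall>y\<in>step_set i. \<exists>i'\<in>{1..T}. insert x (step_set i) - {y} \<subseteq> step_set i'"
  shows False
proof -
  obtain m c where x_eq: "x = (m, c)"
    by fastforce
  obtain j where j: "j \<in> {1..d}" "f (i - 1) j = Suc (f i j) \<or> f i j = Suc (f (i - 1) j)"
    "\<forall>l\<in>{1..d}. l \<noteq> j \<longrightarrow> f (i - 1) l = f i l"
    using step_coordinate[OF i] .
  have pq: "f (i - 1) j \<noteq> f i j"
    using j(2) by auto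
  have in_step: "(j, f (i - 1) j) \<in> step_set i" "(j, f i j) \<in> step_set i"
    using j(1) by (auto simp: mem_step_set)
  obtain i1 where i1: "i1 \<in> {1..T}" "insert x (step_set i) - {(j, f i j)} \<subseteq> step_set i1"
    using cov in_step(2) by blast
  obtain i2 where i2: "i2 \<in> {1..T}" "insert x (step_set i) - {(j, f (i - 1) j)} \<subseteq> step_set i2"
    using cov in_step(1) by blast
  have m: "m \<in> {1..d}"
    using i1(2) x x_eq in_step(2) by (auto simp: mem_step_set)
  have c: "c \<noteq> f (i - 1) m" "c \<noteq> f i m"
    using x x_eq m by (auto simp: mem_step_set)
  show False
  proof (cases "m = j")
    case True
    obtain l where l: "l \<in> {1..d}" "l \<noteq> j"
      using other_coordinate[OF j(1)] .
    then have "(l, f (i - 1) l) \<in> step_set i"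
      by (simp add: mem_step_set)
    then obtain i' where "insert x (step_set i) - {(l, f (i - 1) l)} \<subseteq> step_set i'"
      using cov by blast
    then have "(j, f (i - 1) j) \<in> step_set i'" "(j, f i j) \<in> step_set i'" "(j, c) \<in> step_set i'"
      using in_step x_eq True l(2) by auto
    then show False
      using c True pq by (auto simp: mem_step_set)
  next
    case False
    then show False
      using step_set_insert_off_coordinate[OF i j(3) pq m False c(1)] i1 i2 x_eq by blast
  qed
qed

lemma covered_except_too_large:
  assumes card_S: "card S = Suc (Suc d)" and x: "x \<in> S"
    and covers: "\<forall>y\<in>S - {x}. \<exists>i\<in>{1..T}. S - {y} \<subseteq> step_set i"
  shows False
proof -
  have "covered (S - {x})"
    unfolding covered_def using covers by blast
  moreover have "card (S - {x}) = Suc d"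
    using card_S x by (simp add: card_ge_0_finite)
  ultimately obtain i where i: "i \<in> {1..T}" "S - {x} = step_set i"
    using covered_step_set by blast
  have "\<exists>i'\<in>{1..T}. insert x (step_set i) - {y} \<subseteq> step_set i'" if "y \<in> step_set i" for y
  proof -
    have "y \<in> S - {x}" "S = insert x (step_set i)"
      using that i(2) x by auto
    then show ?thesis
      using covers by auto
  qed
  moreover have "x \<notin> step_set i"
    using i(2) by auto
  ultimately show False
    using step_set_insert_not_covered[OF i(1)] by blast
qed

lemma shadow_subset_step_set:
  assumes "X \<in> chain_shadow (Suc d) walk_edge T"
  shows "\<exists>i\<in>{1..T}. X - {apex} \<subseteq> step_set i"
  using assms unfolding chain_shadow_def chain_union_walk_edge by blast

lemma walk_chain_closed:
  assumes card_S: "card S = Suc (Suc d)" and x: "x \<in> S"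
    and shadow: "\<forall>y\<in>S - {x}. S - {y} \<in> chain_shadow (Suc d) walk_edge T"
  shows "\<exists>i\<in>{1..T}. S = chain_union walk_edge i"
proof -
  have fin: "finite S"
    using card_S by (rule_tac ccontr) simp
  have covers: "\<exists>i\<in>{1..T}. S - {y} - {apex} \<subseteq> step_set i" if "y \<in> S - {x}" for y
    using shadow_subset_step_set shadow that by blast
  consider "apex \<in> S" "x \<noteq> apex" | "x = apex" | "apex \<notin> S"
    by blast
  then show ?thesis
  proof cases
    case 1
    then obtain i where i: "i \<in> {1..T}" "S - {apex} \<subseteq> step_set i"
      using covers[of apex] by auto
    moreover have "card (S - {apex}) = card (step_set i)"
      using card_S 1 fin card_step_set[OF i(1)] by simp
    ultimately have "S - {apex} = step_set i"
      using card_subset_eq[OF finite_step_set] by blast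
    then show ?thesis
      using i(1) 1 by (auto simp: chain_union_walk_edge)
  next
    case 2
    have "covered (S - {apex})"
      unfolding covered_def using covers 2 by (metis Diff_insert2 insert_commute)
    moreover have "card (S - {apex}) = Suc d"
      using card_S 2 x fin by simp
    ultimately obtain i where "i \<in> {1..T}" "S - {apex} = step_set i"
      using covered_step_set by blast
    then show ?thesis
      using 2 x by (auto simp: chain_union_walk_edge)
  next
    case 3
    then have False
      using covered_except_too_large[OF card_S x] covers by simp
    then show ?thesis ..
  qed
qed

lemma card_walk_edge: "card (walk_edge i) = Suc d"
  by (simp add: walk_edge_def apex_notin_point_set finite_point_set card_point_set)

lemma walk_edge_subset_chain_union:
  assumes i: "i \<in> {1..T}" and j: "j \<le> T" and sub: "walk_edge j \<subseteq> chain_union walk_edge i"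
  shows "j = i - 1 \<or> j = i"
proof -
  have "point_set d (f j) \<subseteq> step_set i"
    using sub apex_notin_point_set unfolding walk_edge_def chain_union_walk_edge by blast
  then obtain s where "s \<in> {i - 1, i}" "\<forall>l\<in>{1..d}. f s l = f j l"
    using walk_point_of_subset[OF i] by blast
  then show ?thesis
    using walk_inj[of s j] i j by auto
qed

lemma sequential_chain_walk_edge:
  assumes "n \<le> 4 * k - 3"
  shows "sequential_chain (Suc d) (Astar k d \<union> {apex}) walk_edge T"
proof
  show "walk_edge i \<subseteq> Astar k d \<union> {apex}" if i: "i \<le> T" for i
  proof -
    have "f i l \<in> {1..4 * k - 3}" if "l \<in> {1..d}" for l
      using walk_range[OF i that] assms by auto
    then show ?thesis
      by (auto simp: walk_edge_def point_set_def vtx_def mem_Astar)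
  qed
qed (use T_pos card_walk_edge card_step_set apex_notin_step_set finite_step_set
      walk_edge_subset_chain_union walk_chain_closed in \<open>auto simp: chain_union_walk_edge\<close>)

end

lemma sequential_of_good_walk:
  assumes d: "2 \<le> d" and "1 \<le> T" and k: "1 \<le> k" and "good_walk d (4 * k - 3) f (Suc T)"
  shows "\<exists>e H. (\<forall>i. vtx (Suc d) 1 \<in> e i) \<and>
    sequential k (Suc d) (Astar k d \<union> {vtx (Suc d) 1}) H e T"
proof -
  interpret walk_chain d "4 * k - 3" f T
    using assms by unfold_locales
  interpret sequential_chain "Suc d" "Astar k d \<union> {apex}" walk_edge T
    by (rule sequential_chain_walk_edge) simp
  have "Astar k d \<union> {apex} \<subseteq> Astar k (Suc d)"
    using k by (auto simp: mem_Astar apex_def vtx_def)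
  then have "sequential k (Suc d) (Astar k d \<union> {apex}) chain_graph walk_edge T"
    unfolding sequential_def
    using d e_subset card_e r_graph_chain_graph e0_in_chain_graph chain_graph_infects
      chain_graph_stops chain_graph_minus_e0_stationary chain_graph_reversed_infects
    by auto
  moreover have "\<forall>i. apex \<in> walk_edge i"
    by (simp add: walk_edge_def)
  ultimately show ?thesis
    unfolding apex_def by blast
qed

section \<open>Snakes\<close>

text \<open>At time \<open>s = c * (L + 1) + r\<close> with \<open>r \<le> L\<close>, the snake over a path \<open>f\<close> with \<open>L\<close> points is at
  point \<open>r\<close> of \<open>f\<close> (counted backwards when \<open>c\<close> is odd) on level \<open>2 c + 1\<close> of the new coordinate if
  \<open>r < L\<close>; at \<open>r = L\<close> it climbs to level \<open>2 c + 2\<close> above the last point of the pass. These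
  intermediate levels keep different passes non-adjacent.\<close>
definition snake_index :: "nat \<Rightarrow> nat \<Rightarrow> nat" where
  "snake_index L s =
     (let r = min (s mod Suc L) (L - 1) in if even (s div Suc L) then r else L - 1 - r)"

definition snake_level :: "nat \<Rightarrow> nat \<Rightarrow> nat" where
  "snake_level L s = 2 * (s div Suc L) + (if s mod Suc L < L then 1 else 2)"

definition snake :: "nat \<Rightarrow> nat \<Rightarrow> (nat \<Rightarrow> nat \<Rightarrow> nat) \<Rightarrow> nat \<Rightarrow> nat \<Rightarrow> nat" where
  "snake D L f s = (f (snake_index L s))(Suc D := snake_level L s)"

lemma eq_of_div_mod_eq: "s div m = t div m \<Longrightarrow> s mod m = t mod m \<Longrightarrow> s = (t::nat)"
  by (metis div_mult_mod_eq)

lemma Suc_of_div_mod_eq: "s div m = t div m \<Longrightarrow> s mod m = Suc (t mod m) \<Longrightarrow> s = Suc (t::nat)"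
  by (metis add_Suc_right div_mult_mod_eq)

lemma Suc_of_div_Suc_eq:
  assumes "t div Suc L = Suc (s div Suc L)" "s mod Suc L = L" "t mod Suc L = 0"
  shows "t = Suc s"
proof -
  have "t = Suc (s div Suc L) * Suc L"
    using div_mult_mod_eq[of t "Suc L"] assms by simp
  also have "\<dots> = Suc s"
    using div_mult_mod_eq[of s "Suc L"] assms(2) by simp
  finally show ?thesis .
qed

lemma snake_level_eqD:
  assumes "snake_level L s = snake_level L t"
  shows "s div Suc L = t div Suc L" "s mod Suc L < L \<longleftrightarrow> t mod Suc L < L"
proof -
  have "Suc (2 * a) \<noteq> 2 * b" for a b :: nat
    by presburger
  then show "s div Suc L = t div Suc L" "s mod Suc L < L \<longleftrightarrow> t mod Suc L < L"
    using assms unfolding snake_level_def by (auto split: if_splits dest: sym)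
qed

lemma snake_index_less: "1 \<le> L \<Longrightarrow> snake_index L s < L"
  by (auto simp: snake_index_def Let_def min_def)

lemma snake_step:
  assumes L: "1 \<le> L"
  shows "(snake_level L (Suc s) = snake_level L s \<and>
          (snake_index L (Suc s) = Suc (snake_index L s) \<or> snake_index L s = Suc (snake_index L (Suc s))))
       \<or> (snake_level L (Suc s) = Suc (snake_level L s) \<and> snake_index L (Suc s) = snake_index L s)"
proof -
  consider "Suc (s mod Suc L) < L" | "Suc (s mod Suc L) = L" | "s mod Suc L = L"
    using mod_Suc_le_divisor[of s L] by linarith
  then show ?thesis
  proof cases
    case 1
    then have "Suc s div Suc L = s div Suc L" "Suc s mod Suc L = Suc (s mod Suc L)"
      by (simp_all add: div_Suc mod_Suc)
    then show ?thesis
      using 1 by (auto simp: snake_level_def snake_index_def Let_def)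
  next
    case 2
    then have "Suc s div Suc L = s div Suc L" "Suc s mod Suc L = L"
      by (simp_all add: div_Suc mod_Suc)
    then show ?thesis
      using 2 by (auto simp: snake_level_def snake_index_def Let_def)
  next
    case 3
    then have "Suc s div Suc L = Suc (s div Suc L)" "Suc s mod Suc L = 0"
      by (simp_all add: div_Suc mod_Suc)
    then show ?thesis
      using 3 L by (auto simp: snake_level_def snake_index_def Let_def)
  qed
qed

lemma snake_level_Suc_eq:
  assumes "snake_level L (Suc s) = Suc (snake_level L s)" "s mod Suc L < L"
  shows "Suc (s mod Suc L) = L"
proof (rule ccontr)
  assume "Suc (s mod Suc L) \<noteq> L"
  then have "Suc s div Suc L = s div Suc L" "Suc (s mod Suc L) < L" "Suc s mod Suc L = Suc (s mod Suc L)"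
    using assms(2) by (simp_all add: div_Suc mod_Suc)
  then show False
    using assms(1) by (simp add: snake_level_def)
qed

lemma snake_level_increase_unique:
  assumes "snake_level L (Suc s) = Suc (snake_level L s)" "snake_level L (Suc t) = Suc (snake_level L t)"
    and "snake_level L s = snake_level L t"
  shows "s = t"
proof -
  have "s mod Suc L = t mod Suc L"
  proof (cases "s mod Suc L < L")
    case True
    then show ?thesis
      using snake_level_eqD(2)[OF assms(3)] snake_level_Suc_eq[OF assms(1)] snake_level_Suc_eq[OF assms(2)]
      by simp
  next
    case False
    then show ?thesis
      using snake_level_eqD(2)[OF assms(3)] mod_Suc_le_divisor[of s L] mod_Suc_le_divisor[of t L] by simp
  qed
  then show ?thesis
    using snake_level_eqD(1)[OF assms(3)] eq_of_div_mod_eq by blast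
qed

lemma not_less_mod_Suc_iff: "\<not> s mod Suc L < L \<longleftrightarrow> s mod Suc L = L"
  using mod_Suc_le_divisor[of s L] by linarith

lemma snake_level_Suc_cases:
  assumes "snake_level L t = Suc (snake_level L s)"
  shows "(s mod Suc L < L \<and> t mod Suc L = L \<and> t div Suc L = s div Suc L) \<or>
         (s mod Suc L = L \<and> t mod Suc L < L \<and> t div Suc L = Suc (s div Suc L))"
proof -
  have "Suc (2 * a) \<noteq> 2 * b" "2 * b \<noteq> Suc (2 * a)" for a b :: nat
    by presburger+
  then show ?thesis
    using assms unfolding snake_level_def by (auto simp: not_less_mod_Suc_iff split: if_splits)
qed

locale snake_walk =
  fixes D L M n :: nat and f :: "nat \<Rightarrow> nat \<Rightarrow> nat"
  assumes L_pos: "1 \<le> L" and good: "good_walk D n f L" and level_bound: "2 * M - 1 \<le> n"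
begin

abbreviation "N \<equiv> M * Suc L - 1"

abbreviation "g \<equiv> snake D L f"

lemma snake_low: "l \<noteq> Suc D \<Longrightarrow> g s l = f (snake_index L s) l"
  by (simp add: snake_def)

lemma snake_top: "g s (Suc D) = snake_level L s"
  by (simp add: snake_def)

lemma snake_block_bound:
  assumes "s < N"
  shows "s div Suc L < M" and "s mod Suc L = L \<Longrightarrow> Suc (s div Suc L) < M"
proof -
  have s: "s = s div Suc L * Suc L + s mod Suc L"
    by (rule div_mult_mod_eq[symmetric])
  show "s div Suc L < M"
  proof (rule ccontr)
    assume "\<not> s div Suc L < M"
    then have "M * Suc L \<le> s div Suc L * Suc L"
      by (simp only: not_less mult_le_mono1)
    then show False
      using assms s by linarith
  qed
  assume r: "s mod Suc L = L"
  show "Suc (s div Suc L) < M"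
  proof (rule ccontr)
    assume "\<not> Suc (s div Suc L) < M"
    then have "M * Suc L \<le> Suc (s div Suc L) * Suc L"
      by (simp only: not_less mult_le_mono1)
    then show False
      using assms s r by simp
  qed
qed

lemma snake_level_range:
  assumes "s < N"
  shows "snake_level L s \<in> {1..2 * M - 1}"
proof (cases "s mod Suc L < L")
  case True
  then show ?thesis
    using snake_block_bound(1)[OF assms] by (auto simp: snake_level_def)
next
  case False
  then have "s mod Suc L = L"
    using mod_Suc_le_divisor[of s L] by simp
  then show ?thesis
    using snake_block_bound(2)[OF assms] by (auto simp: snake_level_def)
qed

lemma snake_adj_Suc:
  assumes s: "Suc s < N"
  shows "grid_adj (Suc D) (g s) (g (Suc s))"
proof -
  have idx: "snake_index L s < L" "snake_index L (Suc s) < L"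
    using snake_index_less L_pos by auto
  consider "snake_level L (Suc s) = snake_level L s"
      "snake_index L (Suc s) = Suc (snake_index L s) \<or> snake_index L s = Suc (snake_index L (Suc s))"
    | "snake_level L (Suc s) = Suc (snake_level L s)" "snake_index L (Suc s) = snake_index L s"
    using snake_step[OF L_pos] by blast
  then show ?thesis
  proof cases
    case 1
    then have "grid_adj D (f (snake_index L s)) (f (snake_index L (Suc s)))"
      using good_walk_adj_Suc[OF good] grid_adj_sym idx by auto
    then show ?thesis
      using grid_adj_extend 1(1) unfolding snake_def by metis
  next
    case 2
    then show ?thesis
      unfolding snake_def by (simp add: grid_adj_extend_top)
  qed
qed

lemma snake_inj:
  assumes s: "s < N" and t: "t < N" and eq: "\<forall>l\<in>{1..Suc D}. g s l = g t l"
  shows "s = t"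
proof -
  have level: "snake_level L s = snake_level L t"
    using eq snake_top by (metis atLeastAtMost_iff le_add1 le_refl plus_1_eq_Suc)
  have "\<forall>l\<in>{1..D}. f (snake_index L s) l = f (snake_index L t) l"
  proof
    fix l assume "l \<in> {1..D}"
    then have "g s l = g t l" "l \<noteq> Suc D"
      using eq by auto
    then show "f (snake_index L s) l = f (snake_index L t) l"
      by (simp add: snake_low)
  qed
  then have idx: "snake_index L s = snake_index L t"
    using good_walk_inj[OF good] snake_index_less L_pos by blast
  note block = snake_level_eqD[OF level]
  have "s mod Suc L = t mod Suc L"
  proof (cases "s mod Suc L < L")
    case True
    then show ?thesis
      using idx block by (auto simp: snake_index_def Let_def min_def split: if_splits)
  next
    case False
    then show ?thesis
      using block(2) mod_Suc_le_divisor[of s L] mod_Suc_le_divisor[of t L] by simp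
  qed
  then show ?thesis
    using block(1) eq_of_div_mod_eq by blast
qed

lemma snake_climb:
  assumes idx: "snake_index L s = snake_index L t" and level: "snake_level L t = Suc (snake_level L s)"
  shows "t = Suc s"
proof (cases "s mod Suc L < L")
  case True
  then have "t mod Suc L = L" "t div Suc L = s div Suc L"
    using snake_level_Suc_cases[OF level] by auto
  moreover have "Suc (s mod Suc L) = L"
    using idx True calculation L_pos by (auto simp: snake_index_def Let_def min_def split: if_splits)
  ultimately show ?thesis
    using Suc_of_div_mod_eq by metis
next
  case False
  then have s_mod: "s mod Suc L = L" and t: "t mod Suc L < L" "t div Suc L = Suc (s div Suc L)"
    using snake_level_Suc_cases[OF level] by auto
  then have "t mod Suc L = 0"
    using idx s_mod L_pos by (auto simp: snake_index_def Let_def min_def split: if_splits)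
  then show ?thesis
    by (rule Suc_of_div_Suc_eq[OF t(2) s_mod])
qed

lemma snake_adj_consecutive:
  assumes s: "s < N" and t: "t < N" and adj: "grid_adj (Suc D) (g s) (g t)"
  shows "s = Suc t \<or> t = Suc s"
proof (cases "snake_level L s = snake_level L t")
  case True
  have "grid_adj D (g s) (g t)"
    using grid_adj_restrict[OF adj] True snake_top by simp
  then have "grid_adj D (f (snake_index L s)) (f (snake_index L t))"
    using grid_adj_cong snake_low by (metis Suc_n_not_le_n atLeastAtMost_iff)
  then have idx: "snake_index L s = Suc (snake_index L t) \<or> snake_index L t = Suc (snake_index L s)"
    using good_walk_adj_consecutive[OF good] snake_index_less L_pos by blast
  note block = snake_level_eqD[OF True]
  show ?thesis
  proof (cases "s mod Suc L < L")
    case True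
    then have "s mod Suc L = Suc (t mod Suc L) \<or> t mod Suc L = Suc (s mod Suc L)"
      using idx block by (auto simp: snake_index_def Let_def min_def split: if_splits)
    then show ?thesis
      using Suc_of_div_mod_eq block(1) by metis
  next
    case False
    then have "s = t"
      using block eq_of_div_mod_eq mod_Suc_le_divisor[of s L] mod_Suc_le_divisor[of t L] by (metis le_neq_implies_less)
    then show ?thesis
      using idx by simp
  qed
next
  case False
  then have "\<forall>l\<in>{1..D}. f (snake_index L s) l = f (snake_index L t) l"
    using grid_adj_top(1)[OF adj] snake_top by (simp add: snake_def)
  then have "snake_index L s = snake_index L t"
    using good_walk_inj[OF good] snake_index_less L_pos by blast
  moreover have "snake_level L s = Suc (snake_level L t) \<or> snake_level L t = Suc (snake_level L s)"
    using grid_adj_top(2)[OF adj] False snake_top by simp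
  ultimately show ?thesis
    using snake_climb by metis
qed

lemma walk_step_snake_low:
  assumes j: "j \<in> {1..D}" and l: "l \<in> {1..D}" and jl: "j \<noteq> l" and aa': "a \<noteq> a'"
    and step: "walk_step g N j l a a' b"
  shows "walk_step f L j l a a' b"
proof -
  obtain s where s: "Suc s < N" "(g s j = a \<and> g (Suc s) j = a') \<or> (g s j = a' \<and> g (Suc s) j = a)"
    "g s l = b"
    using step unfolding walk_step_def by blast
  let ?i = "snake_index L s" and ?i' = "snake_index L (Suc s)"
  have low: "g s j = f ?i j" "g (Suc s) j = f ?i' j" "g s l = f ?i l"
    using j l snake_low by auto
  have ne: "f ?i j \<noteq> f ?i' j"
    using s(2) aa' low by auto
  have idx: "?i < L" "?i' < L"
    using snake_index_less L_pos by auto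
  consider "?i' = Suc ?i" | "?i = Suc ?i'"
    using snake_step[OF L_pos, of s] ne by auto
  then show ?thesis
  proof cases
    case 1
    then show ?thesis
      unfolding walk_step_def using idx s(2,3) low by (intro exI[of _ ?i]) auto
  next
    case 2
    then have "grid_adj D (f ?i') (f (Suc ?i'))"
      using good_walk_adj_Suc[OF good] idx by simp
    then have "f ?i' l = f ?i l"
      using grid_adj_coordinate_unique[OF _ j] ne 2 l jl by auto
    then show ?thesis
      unfolding walk_step_def using 2 idx s(2,3) low by (intro exI[of _ ?i']) auto
  qed
qed

lemma walk_step_snake_top:
  assumes aa': "a \<noteq> a'"
    and step: "walk_step g N (Suc D) l a a' b" "walk_step g N (Suc D) l a a' b'"
  shows "b = b'"
proof -
  obtain s where s: "Suc s < N"
    "(g s (Suc D) = a \<and> g (Suc s) (Suc D) = a') \<or> (g s (Suc D) = a' \<and> g (Suc s) (Suc D) = a)"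
    "g s l = b"
    using step(1) unfolding walk_step_def by blast
  obtain t where t: "Suc t < N"
    "(g t (Suc D) = a \<and> g (Suc t) (Suc D) = a') \<or> (g t (Suc D) = a' \<and> g (Suc t) (Suc D) = a)"
    "g t l = b'"
    using step(2) unfolding walk_step_def by blast
  have "snake_level L (Suc s) = Suc (snake_level L s)" "snake_level L (Suc t) = Suc (snake_level L t)"
    using snake_step[OF L_pos, of s] snake_step[OF L_pos, of t] s(2) t(2) aa' snake_top by auto
  moreover from this have "snake_level L s = snake_level L t"
    using s(2) t(2) snake_top by auto
  ultimately have "s = t"
    by (rule snake_level_increase_unique)
  then show ?thesis
    using s(3) t(3) by simp
qed

lemma snake_square_free: "square_free (Suc D) g N"
  unfolding square_free_def
proof (intro ballI allI impI notI)
  fix j l a a' b b'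
  assume j: "j \<in> {1..Suc D}" and l: "l \<in> {1..Suc D}" and jl: "j \<noteq> l"
    and aa': "a \<noteq> a'" and bb': "b \<noteq> b'"
    and steps: "walk_step g N j l a a' b \<and> walk_step g N j l a a' b' \<and>
      walk_step g N l j b b' a \<and> walk_step g N l j b b' a'"
  consider "j = Suc D" | "l = Suc D" | "j \<in> {1..D}" "l \<in> {1..D}"
    using j l by force
  then show False
  proof cases
    case 1
    then show False
      using walk_step_snake_top[OF aa'] steps bb' by blast
  next
    case 2
    then show False
      using walk_step_snake_top[OF bb'] steps aa' by blast
  next
    case 3
    then have "walk_step f L j l a a' b" "walk_step f L j l a a' b'"
      "walk_step f L l j b b' a" "walk_step f L l j b b' a'"
      using walk_step_snake_low jl aa' bb' steps by auto
    then show False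
      using good_walk_square_free[OF good] 3 jl aa' bb' unfolding square_free_def by blast
  qed
qed

lemma snake_range:
  assumes s: "s < N" and l: "l \<in> {1..Suc D}"
  shows "g s l \<in> {1..n}"
proof (cases "l = Suc D")
  case True
  then show ?thesis
    using snake_level_range[OF s] level_bound snake_top by auto
next
  case False
  then have "l \<in> {1..D}"
    using l by auto
  then show ?thesis
    using good_walk_range[OF good] snake_index_less[OF L_pos] snake_low False by simp
qed

lemma good_walk_snake: "good_walk (Suc D) n g N"
  unfolding good_walk_def
  using snake_inj snake_adj_Suc snake_adj_consecutive snake_square_free snake_range by blast

end

lemma good_walk_line:
  assumes "N \<le> n"
  shows "good_walk 1 n (\<lambda>s l. Suc s) N"
  using assms unfolding good_walk_def square_free_def grid_adj_def by auto

fun iterated_snake :: "nat \<Rightarrow> nat \<Rightarrow> nat \<Rightarrow> nat \<Rightarrow> nat" where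
  "iterated_snake M 0 = (\<lambda>s l. Suc s)"
| "iterated_snake M (Suc D) = snake (Suc D) (2 * M ^ Suc D - 1) (iterated_snake M D)"

lemma good_walk_iterated_snake:
  assumes M: "1 \<le> M" and n: "2 * M - 1 \<le> n"
  shows "good_walk (Suc D) n (iterated_snake M D) (2 * M ^ Suc D - 1)"
proof (induction D)
  case 0
  then show ?case
    using good_walk_line[OF n] by simp
next
  case (Suc D)
  have "1 \<le> M ^ Suc D"
    using M by simp
  then have L: "1 \<le> 2 * M ^ Suc D - 1" "Suc (2 * M ^ Suc D - 1) = 2 * M ^ Suc D"
    by linarith+
  then have N: "M * Suc (2 * M ^ Suc D - 1) - 1 = 2 * M ^ Suc (Suc D) - 1"
    by (simp only: L(2) power_Suc[of M "Suc D"] mult.left_commute)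
  interpret snake_walk "Suc D" "2 * M ^ Suc D - 1" M n "iterated_snake M D"
    using L(1) Suc n by unfold_locales
  show ?case
    using good_walk_snake N by simp
qed

lemma running_time_bounds:
  fixes r k :: nat
  assumes "3 \<le> r" "2 \<le> k"
  defines "T \<equiv> (2 * k - 1) ^ (r - 3) * (8 * k\<^sup>2 - 12 * k + 6) - 2"
  shows "1 \<le> T" and "Suc T \<le> 2 * (2 * k - 1) ^ (r - 1) - 1"
proof -
  obtain K where k: "k = K + 2"
    using assms(2) le_Suc_ex by (metis add.commute)
  define P where "P = (2 * K + 3) ^ (r - 3)"
  have r: "r - 1 = Suc (Suc (r - 3))" and base: "2 * k - 1 = 2 * K + 3"
    using assms(1) k by simp_all
  have X: "8 * k\<^sup>2 - 12 * k + 6 = 8 * K * K + 20 * K + 14"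
    unfolding k by (simp add: power2_eq_square algebra_simps)
  have "T = P * (8 * K * K + 20 * K + 14) - 2"
    unfolding T_def base X P_def ..
  moreover have "(2 * k - 1) ^ (r - 1) = P * ((2 * K + 3) * (2 * K + 3))"
    unfolding P_def r base by (simp only: power_Suc mult_ac)
  moreover have "1 * 14 \<le> P * (8 * K * K + 20 * K + 14)"
    unfolding P_def by (rule mult_le_mono) simp_all
  moreover have "P * (8 * K * K + 20 * K + 14) \<le> P * (2 * ((2 * K + 3) * (2 * K + 3)))"
    by (rule mult_le_mono2) (simp add: algebra_simps)
  then have "P * (8 * K * K + 20 * K + 14) \<le> 2 * (P * ((2 * K + 3) * (2 * K + 3)))"
    by (simp only: mult.left_commute[of P 2])
  ultimately show "1 \<le> T" and "Suc T \<le> 2 * (2 * k - 1) ^ (r - 1) - 1"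
    by linarith+
qed

theorem proposition2p3:
  fixes r k :: nat
  assumes "r \<ge> 3" and "k \<ge> 2"
  shows "\<exists>(e :: nat \<Rightarrow> (nat \<times> nat) set) H.
           (\<forall>i \<le> (2*k - 1)^(r - 3) * (8*k^2 - 12*k + 6) - 2. vtx r 1 \<in> e i) \<and>
           sequential k r (Astar k (r - 1) \<union> {vtx r 1}) H e
             ((2*k - 1)^(r - 3) * (8*k^2 - 12*k + 6) - 2)"
proof -
  define T where "T = (2*k - 1)^(r - 3) * (8*k^2 - 12*k + 6) - 2"
  define M where "M = 2 * k - 1"
  have r: "Suc (r - 2) = r - 1" "Suc (r - 1) = r" "2 \<le> r - 1"
    using assms(1) by auto
  have M: "M \<ge> 1" "2 * M - 1 = 4 * k - 3"
    using assms(2) unfolding M_def by auto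
  have "good_walk (r - 1) (4 * k - 3) (iterated_snake M (r - 2)) (2 * M ^ (r - 1) - 1)"
    using good_walk_iterated_snake[OF M(1), of "4 * k - 3" "r - 2"] M(2) r(1) by simp
  moreover have "1 \<le> T" "Suc T \<le> 2 * M ^ (r - 1) - 1"
    using running_time_bounds[OF assms] unfolding T_def M_def by simp_all
  ultimately have walk: "good_walk (r - 1) (4 * k - 3) (iterated_snake M (r - 2)) (Suc T)"
    using good_walk_prefix by blast
  have "1 \<le> k"
    using assms(2) by simp
  then obtain e H where "\<forall>i. vtx r 1 \<in> e i" "sequential k r (Astar k (r - 1) \<union> {vtx r 1}) H e T"
    using sequential_of_good_walk[OF r(3) \<open>1 \<le> T\<close> _ walk] r(2) by auto
  then show ?thesis
    unfolding T_def by blast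
qed

end
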